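(* Let $P$ be a uniform-length histogram polygon with contact tree $T$. Then the base rectangle of $P$ is orientation-fixed with every rectangle on the left spine and on the right spine of $T$.
   Context: Two points $p,q$ of a polygon $P$ see each other if the segment $pq$ does not intersect the exterior of $P$ (visibility along edges and through vertices allowed). A uniform-length histogram polygon is an orthogonal simple polygon with a distinguished horizontal base edge such that $P$ lies above the base edge and is monotone with respect to it, all other boundary edges have the same length, and no three consecutive boundary vertices are collinear; its boundary apart from the base edge is a chain of alternating up- and down-staircases. Every vertical boundary edge on an up-staircase has a companion vertical boundary edge on a down-staircase spanning the same heights such that their four endpoints are the corners of an axis-aligned rectangle inside $P$; these rectangles decompose $P$. The two upper corners of a rectangle are its top vertices and the two lower corners its bottom vertices. The contact tree $T$ has one node per rectangle, two nodes adjacent iff the rectangles touch along a segment of positive length, rooted at the base rectangle (the one containing the base edge); leaves correspond to the rectangles containing tabs (top horizontal boundary edges with two convex endpoints), ordered left to right by position. The left (right) spine of $T$ is the path from the root to the leftmost (rightmost) leaf. Two distinct rectangles $R_1,R_2$ are orientation-fixed if a bottom vertex of one of them sees a top vertex of the other. *)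

theory Defs
  imports "HOL-Analysis.Analysis"
begin

text \<open>
A uniform-length histogram polygon with common edge length L > 0 is represented (up to
isometry) by the list hs of its column heights, measured in units of L.  The boundary apart from the base is the chain
of alternating vertical and horizontal edges, all of length L.
\<close>

definition uniform_hist :: "nat list \<Rightarrow> bool" where
  "uniform_hist hs \<longleftrightarrow> hs \<noteq> [] \<and> hd hs = 1 \<and> last hs = 1 \<and>
     (\<forall>c < length hs. 1 \<le> hs ! c) \<and>
     (\<forall>c. Suc c < length hs \<longrightarrow> hs ! Suc c = hs ! c + 1 \<or> hs ! c = hs ! Suc c + 1)"

definition polygon :: "real \<Rightarrow> nat list \<Rightarrow> (real \<times> real) set" where
  "polygon L hs = {(x, y). 0 \<le> y \<and>
     (\<exists>c < length hs. L * real c \<le> x \<and> x \<le> L * real (Suc c) \<and> y \<le> L * real (hs ! c))}"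

definition sees :: "real \<Rightarrow> nat list \<Rightarrow> real \<times> real \<Rightarrow> real \<times> real \<Rightarrow> bool" where
  "sees L hs p q \<longleftrightarrow> closed_segment p q \<subseteq> polygon L hs"

text \<open>Vertical boundary edge on an up-staircase at x = L*i, going from height L*(k-1)
  to L*k; vertical boundary edge on a down-staircase at x = L*j, from L*k down to L*(k-1).\<close>
definition up_edge :: "nat list \<Rightarrow> nat \<Rightarrow> nat \<Rightarrow> bool" where
  "up_edge hs i k \<longleftrightarrow> i < length hs \<and> hs ! i = k \<and>
     (if i = 0 then k = 1 else hs ! (i - 1) + 1 = k)"

definition down_edge :: "nat list \<Rightarrow> nat \<Rightarrow> nat \<Rightarrow> bool" where
  "down_edge hs j k \<longleftrightarrow> 0 < j \<and> j \<le> length hs \<and> hs ! (j - 1) = k \<and>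
     (if j = length hs then k = 1 else hs ! j + 1 = k)"

definition rbox :: "real \<Rightarrow> nat \<times> nat \<times> nat \<Rightarrow> (real \<times> real) set" where
  "rbox L R = (case R of (i, j, k) \<Rightarrow>
     {(x, y). L * real i \<le> x \<and> x \<le> L * real j \<and> L * (real k - 1) \<le> y \<and> y \<le> L * real k})"

definition rects :: "real \<Rightarrow> nat list \<Rightarrow> (nat \<times> nat \<times> nat) set" where
  "rects L hs = {(i, j, k). up_edge hs i k \<and> down_edge hs j k \<and> i < j \<and>
                            rbox L (i, j, k) \<subseteq> polygon L hs}"

definition top_vertices :: "real \<Rightarrow> nat \<times> nat \<times> nat \<Rightarrow> (real \<times> real) set" where
  "top_vertices L R = (case R of (i, j, k) \<Rightarrow>
     {(L * real i, L * real k), (L * real j, L * real k)})"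

definition bottom_vertices :: "real \<Rightarrow> nat \<times> nat \<times> nat \<Rightarrow> (real \<times> real) set" where
  "bottom_vertices L R = (case R of (i, j, k) \<Rightarrow>
     {(L * real i, L * (real k - 1)), (L * real j, L * (real k - 1))})"

definition orientation_fixed ::
  "real \<Rightarrow> nat list \<Rightarrow> nat \<times> nat \<times> nat \<Rightarrow> nat \<times> nat \<times> nat \<Rightarrow> bool" where
  "orientation_fixed L hs R1 R2 \<longleftrightarrow> R1 \<noteq> R2 \<and>
     ((\<exists>b \<in> bottom_vertices L R1. \<exists>t \<in> top_vertices L R2. sees L hs b t) \<or>
      (\<exists>b \<in> bottom_vertices L R2. \<exists>t \<in> top_vertices L R1. sees L hs b t))"

definition base_rect :: "nat list \<Rightarrow> nat \<times> nat \<times> nat" where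
  "base_rect hs = (0, length hs, 1)"

definition touches :: "real \<Rightarrow> nat \<times> nat \<times> nat \<Rightarrow> nat \<times> nat \<times> nat \<Rightarrow> bool" where
  "touches L R1 R2 \<longleftrightarrow> R1 \<noteq> R2 \<and>
     (\<exists>p q. p \<noteq> q \<and> closed_segment p q \<subseteq> rbox L R1 \<inter> rbox L R2)"

text \<open>Tabs: the top horizontal edge of column c with two convex endpoints.\<close>
definition is_tab :: "nat list \<Rightarrow> nat \<Rightarrow> bool" where
  "is_tab hs c \<longleftrightarrow> c < length hs \<and> (c = 0 \<or> hs ! (c - 1) < hs ! c) \<and>
     (Suc c = length hs \<or> hs ! Suc c < hs ! c)"

definition tab_edge :: "real \<Rightarrow> nat list \<Rightarrow> nat \<Rightarrow> (real \<times> real) set" where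
  "tab_edge L hs c = closed_segment (L * real c, L * real (hs ! c))
                                    (L * real (Suc c), L * real (hs ! c))"

definition leftmost_leaf :: "real \<Rightarrow> nat list \<Rightarrow> nat \<times> nat \<times> nat \<Rightarrow> bool" where
  "leftmost_leaf L hs R \<longleftrightarrow> R \<in> rects L hs \<and>
     tab_edge L hs (LEAST c. is_tab hs c) \<subseteq> rbox L R"

definition rightmost_leaf :: "real \<Rightarrow> nat list \<Rightarrow> nat \<times> nat \<times> nat \<Rightarrow> bool" where
  "rightmost_leaf L hs R \<longleftrightarrow> R \<in> rects L hs \<and>
     tab_edge L hs (GREATEST c. is_tab hs c) \<subseteq> rbox L R"

text \<open>R lies on the (unique, as T is a tree) simple path from a to b in T.\<close>
definition on_path :: "real \<Rightarrow> nat list \<Rightarrow> nat \<times> nat \<times> nat \<Rightarrow> nat \<times> nat \<times> nat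
                        \<Rightarrow> nat \<times> nat \<times> nat \<Rightarrow> bool" where
  "on_path L hs a b R \<longleftrightarrow> (\<exists>ps. ps \<noteq> [] \<and> distinct ps \<and> hd ps = a \<and> last ps = b \<and>
      set ps \<subseteq> rects L hs \<and>
      (\<forall>n. Suc n < length ps \<longrightarrow> touches L (ps ! n) (ps ! Suc n)) \<and> R \<in> set ps)"

definition on_left_spine :: "real \<Rightarrow> nat list \<Rightarrow> nat \<times> nat \<times> nat \<Rightarrow> bool" where
  "on_left_spine L hs R \<longleftrightarrow>
     (\<exists>l. leftmost_leaf L hs l \<and> on_path L hs (base_rect hs) l R)"

definition on_right_spine :: "real \<Rightarrow> nat list \<Rightarrow> nat \<times> nat \<times> nat \<Rightarrow> bool" where
  "on_right_spine L hs R \<longleftrightarrow>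
     (\<exists>l. rightmost_leaf L hs l \<and> on_path L hs (base_rect hs) l R)"

end

(*
  The rectangles covering a fixed column c form a chain, one for each height up to hs ! c.
  A contact path leaving this chain from its rectangle of height a moves into rectangles
  separated from column c by a valley whose lowest column has height exactly a; it can
  re-enter the chain only through that same rectangle of height a, which a simple path
  cannot revisit.  Hence a simple contact path between two rectangles covering c never
  leaves the chain, and every rectangle on the left spine covers the column c0 of the
  leftmost tab.  Up to c0 the heights form the staircase 1, 2, ..., c0 + 1, so such a
  rectangle (i, j, k) has k = i + 1, and the segment from the origin to its top right
  corner (j, k) stays below the staircase left of i and inside the rectangle's columns
  from i on.  The right spine is the mirror image.
*)

theory Submission
  imports Defs
begin

lemma uniform_histD:
  assumes "uniform_hist hs"
  shows "hs ! 0 = 1" "hs ! (length hs - 1) = 1"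
    "Suc c < length hs \<Longrightarrow> hs ! Suc c = hs ! c + 1 \<or> hs ! c = hs ! Suc c + 1"
  using assms unfolding uniform_hist_def by (auto simp: hd_conv_nth last_conv_nth)

lemma mem_rbox_iff:
  assumes "0 < L"
  shows "(x, y) \<in> rbox L (i, j, k) \<longleftrightarrow>
    real i \<le> x / L \<and> x / L \<le> real j \<and> real k - 1 \<le> y / L \<and> y / L \<le> real k"
  using assms by (auto simp: rbox_def pos_le_divide_eq pos_divide_le_eq mult.commute)

lemma rbox_subset_polygon_height:
  assumes L: "0 < L" and sub: "rbox L (i, j, k) \<subseteq> polygon L hs" and c: "i \<le> c" "c < j"
  shows "k \<le> hs ! c"
proof -
  have "(L * (real c + 1/2), L * real k) \<in> rbox L (i, j, k)"
    using L c by (simp add: mem_rbox_iff)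
  with sub obtain c' where c': "c' < length hs" "L * real c' \<le> L * (real c + 1/2)"
    "L * (real c + 1/2) \<le> L * real (Suc c')" "L * real k \<le> L * real (hs ! c')"
    unfolding polygon_def by auto
  then have "real c' \<le> real c + 1/2" "real c + 1/2 \<le> real c' + 1" "k \<le> hs ! c'"
    using L by (simp_all add: mult_le_cancel_left_pos)
  moreover from this(1,2) have "c' = c" by linarith
  ultimately show ?thesis by simp
qed

lemma rectsD:
  assumes "0 < L" and "(i, j, k) \<in> rects L hs"
  shows "i < j" "j \<le> length hs" "hs ! i = k" "hs ! (j - 1) = k"
    "\<And>c. i \<le> c \<Longrightarrow> c < j \<Longrightarrow> k \<le> hs ! c"
    "0 < i \<Longrightarrow> hs ! (i - 1) + 1 = k"
    "j < length hs \<Longrightarrow> hs ! j + 1 = k"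
  using assms rbox_subset_polygon_height[OF assms(1)]
  by (auto simp: rects_def up_edge_def down_edge_def)

lemma rects_maximal:
  assumes L: "0 < L" and R: "(i, j, k) \<in> rects L hs" and q: "q < length hs"
    and high: "\<And>d. p \<le> d \<Longrightarrow> d \<le> q \<Longrightarrow> k \<le> hs ! d"
    and c: "p \<le> c" "c \<le> q" "i \<le> c" "c < j"
  shows "i \<le> p \<and> q < j"
proof (intro conjI)
  note R = rectsD[OF L R]
  show "i \<le> p"
  proof (rule ccontr)
    assume "\<not> i \<le> p"
    then have "0 < i" "p \<le> i - 1" "i - 1 \<le> q" using c by auto
    then show False using high[of "i - 1"] R(6) by simp
  qed
  show "q < j"
  proof (rule ccontr)
    assume "\<not> q < j"
    then show False using high[of j] R(7) c q by auto
  qed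
qed

lemma rects_nested:
  assumes L: "0 < L" and R: "(i, j, k) \<in> rects L hs" and R': "(i', j', k') \<in> rects L hs"
    and "k \<le> k'" and c: "i \<le> c" "c < j" "i' \<le> c" "c < j'"
  shows "i \<le> i' \<and> j' \<le> j"
proof -
  note R' = rectsD[OF L R']
  have "i \<le> i' \<and> j' - 1 < j"
    by (rule rects_maximal[OF L R, of "j' - 1" i' c]) (use assms R' in \<open>auto intro: order_trans\<close>)
  then show ?thesis by auto
qed

lemma rects_unique_at_column:
  assumes "0 < L" "(i, j, k) \<in> rects L hs" "(i', j', k) \<in> rects L hs"
    and "i \<le> c" "c < j" "i' \<le> c" "c < j'"
  shows "(i, j) = (i', j')"
  using rects_nested[OF assms(1-3)] rects_nested[OF assms(1,3,2)] assms(4-) by fastforce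

lemma segment_in_rboxes_cases:
  assumes L: "0 < L" and "p \<noteq> q" and seg: "closed_segment p q \<subseteq> rbox L (i, j, k) \<inter> rbox L (i', j', k')"
  shows "(i < j' \<and> i' < j \<and> k \<le> k' + 1 \<and> k' \<le> k + 1) \<or> (k = k' \<and> i \<le> j' \<and> i' \<le> j)"
proof -
  obtain x1 y1 x2 y2 where pq: "p = (x1, y1)" "q = (x2, y2)" by (cases p, cases q) auto
  have "{(x1, y1), (x2, y2)} \<subseteq> rbox L (i, j, k) \<inter> rbox L (i', j', k')"
    using seg pq ends_in_segment[of p q] by auto
  then have b: "real i \<le> x1 / L" "x1 / L \<le> real j" "real k - 1 \<le> y1 / L" "y1 / L \<le> real k"
    "real i' \<le> x1 / L" "x1 / L \<le> real j'" "real k' - 1 \<le> y1 / L" "y1 / L \<le> real k'"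
    "real i \<le> x2 / L" "x2 / L \<le> real j" "real k - 1 \<le> y2 / L" "y2 / L \<le> real k"
    "real i' \<le> x2 / L" "x2 / L \<le> real j'" "real k' - 1 \<le> y2 / L" "y2 / L \<le> real k'"
    using L by (simp_all add: mem_rbox_iff)
  have "x1 / L \<noteq> x2 / L \<or> y1 / L \<noteq> y2 / L"
    using \<open>p \<noteq> q\<close> pq L by auto
  then show ?thesis
  proof
    assume "x1 / L \<noteq> x2 / L"
    then have "real i < real j'" "real i' < real j" "real k \<le> real k' + 1" "real k' \<le> real k + 1"
      using b by linarith+
    then show ?thesis by linarith
  next
    assume "y1 / L \<noteq> y2 / L"
    then have "real k < real k' + 1" "real k' < real k + 1" "real i \<le> real j'" "real i' \<le> real j"
      using b by linarith+
    then show ?thesis by linarith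
  qed
qed

lemma touches_rects_nested:
  assumes L: "0 < L" and R: "(i, j, k) \<in> rects L hs" and R': "(i', j', k') \<in> rects L hs"
    and "touches L (i, j, k) (i', j', k')"
  shows "(k' = Suc k \<and> i \<le> i' \<and> j' \<le> j) \<or> (k = Suc k' \<and> i' \<le> i \<and> j \<le> j')"
proof -
  note R1 = rectsD[OF L R] and R2 = rectsD[OF L R']
  obtain p q where ne: "(i, j, k) \<noteq> (i', j', k')" and "p \<noteq> q"
    and "closed_segment p q \<subseteq> rbox L (i, j, k) \<inter> rbox L (i', j', k')"
    using assms(4) unfolding touches_def by blast
  then consider "i < j'" "i' < j" "k \<le> k' + 1" "k' \<le> k + 1" | "k = k'" "i \<le> j'" "i' \<le> j"
    using segment_in_rboxes_cases[OF L] by blast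
  then show ?thesis
  proof cases
    case 1
    have "k \<noteq> k'"
      using rects_unique_at_column[OF L R, of i' j' "max i i'"] R' ne 1 R1(1) R2(1) by auto
    then consider "k' = Suc k" | "k = Suc k'" using 1 by linarith
    then show ?thesis
    proof cases
      case 1
      then show ?thesis using rects_nested[OF L R R', of "max i i'"] \<open>i < j'\<close> \<open>i' < j\<close> R1(1) R2(1)
        by auto
    next
      case 2
      then show ?thesis using rects_nested[OF L R' R, of "max i i'"] \<open>i < j'\<close> \<open>i' < j\<close> R1(1) R2(1)
        by auto
    qed
  next
    case 2
    have "\<not> (i < j' \<and> i' < j)"
    proof
      assume "i < j' \<and> i' < j"
      then have "(i, j) = (i', j')"
        using rects_unique_at_column[OF L R, of i' j' "max i i'"] R' 2(1) R1(1) R2(1) by auto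
      with ne 2(1) show False by simp
    qed
    then have "i = j' \<or> i' = j" using 2 by auto
    then show ?thesis
      using 2 R1(1-3,7) R2(1-3,7) by auto
  qed
qed

definition covers_column :: "nat \<Rightarrow> nat \<times> nat \<times> nat \<Rightarrow> bool" where
  "covers_column c R \<longleftrightarrow> fst R \<le> c \<and> c < fst (snd R)"

definition separated_at :: "nat list \<Rightarrow> nat \<Rightarrow> nat \<Rightarrow> nat \<times> nat \<times> nat \<Rightarrow> bool" where
  "separated_at hs c a R \<longleftrightarrow> (case R of (i, j, k) \<Rightarrow>
     \<not> covers_column c R \<and> a < k \<and>
     (\<forall>d \<in> {min c i..max c (j - 1)}. a \<le> hs ! d) \<and> (\<exists>d \<in> {min c i..max c (j - 1)}. hs ! d \<le> a))"

lemma separated_at_leave: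
  assumes L: "0 < L" and c: "c < length hs"
    and G: "(i, j, k) \<in> rects L hs" "covers_column c (i, j, k)"
    and X: "(i', j', k') \<in> rects L hs" "\<not> covers_column c (i', j', k')"
    and touch: "touches L (i, j, k) (i', j', k')"
  shows "separated_at hs c k (i', j', k')"
proof -
  note G1 = rectsD[OF L G(1)] and X1 = rectsD[OF L X(1)]
  have up: "k' = Suc k" and sub: "i \<le> i'" "j' \<le> j"
    using touches_rects_nested[OF L G(1) X(1) touch] G(2) X(2) by (auto simp: covers_column_def)
  have "\<forall>d \<in> {min c i'..max c (j' - 1)}. k \<le> hs ! d"
    using G1(5) G(2) sub X1(1) by (auto simp: covers_column_def)
  moreover have "\<exists>d \<in> {min c i'..max c (j' - 1)}. hs ! d \<le> k"
  proof (rule ccontr)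
    assume "\<not> ?thesis"
    then have high: "\<And>d. min c i' \<le> d \<Longrightarrow> d \<le> max c (j' - 1) \<Longrightarrow> k' \<le> hs ! d"
      using up by force
    have "i' \<le> min c i' \<and> max c (j' - 1) < j'"
      by (rule rects_maximal[OF L X(1) _ high, where c = i']) (use X1 c in auto)
    then show False using X(2) by (auto simp: covers_column_def)
  qed
  ultimately show ?thesis using X(2) up by (simp add: separated_at_def)
qed

lemma separated_at_climb:
  assumes L: "0 < L" and X: "(i, j, k) \<in> rects L hs" "separated_at hs c a (i, j, k)"
    and Y: "(i', j', k') \<in> rects L hs" and up: "k' = Suc k" "i \<le> i'" "j' \<le> j"
  shows "separated_at hs c a (i', j', k')"
proof -
  from X(2) have Xc: "\<not> (i \<le> c \<and> c < j)" and "a < k"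
    and low: "\<forall>d \<in> {min c i..max c (j - 1)}. a \<le> hs ! d"
    and "\<exists>d \<in> {min c i..max c (j - 1)}. hs ! d \<le> a"
    by (auto simp: separated_at_def covers_column_def)
  then obtain w where w: "w \<in> {min c i..max c (j - 1)}" "hs ! w \<le> a" by auto
  have "\<not> (i \<le> w \<and> w < j)" using rectsD(5)[OF L X(1), of w] w(2) \<open>a < k\<close> by auto
  then have "w \<in> {min c i'..max c (j' - 1)}"
    using w(1) Xc up rectsD(1)[OF L Y] by auto
  moreover have "\<forall>d \<in> {min c i'..max c (j' - 1)}. a \<le> hs ! d" using low up by fastforce
  ultimately show ?thesis
    using Xc up \<open>a < k\<close> w(2) rectsD(1)[OF L Y] by (auto simp: separated_at_def covers_column_def)
qed

lemma separated_at_descend: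
  assumes L: "0 < L" and c: "c < length hs"
    and X: "(i, j, k) \<in> rects L hs" "separated_at hs c a (i, j, k)"
    and Y: "(i', j', k') \<in> rects L hs" "\<not> covers_column c (i', j', k')"
    and down: "k = Suc k'" "i' \<le> i" "j \<le> j'"
  shows "separated_at hs c a (i', j', k')"
proof -
  note X1 = rectsD[OF L X(1)]
  from X(2) have Xc: "\<not> (i \<le> c \<and> c < j)"
    and low: "\<And>d. min c i \<le> d \<Longrightarrow> d \<le> max c (j - 1) \<Longrightarrow> a \<le> hs ! d"
    and "\<exists>d \<in> {min c i..max c (j - 1)}. hs ! d \<le> a"
    by (auto simp: separated_at_def covers_column_def)
  then obtain w where w: "w \<in> {min c i..max c (j - 1)}" "hs ! w \<le> a" by auto
  have "a < k'"
  proof (rule ccontr)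
    assume "\<not> a < k'"
    then have high: "\<And>d. min c i \<le> d \<Longrightarrow> d \<le> max c (j - 1) \<Longrightarrow> k' \<le> hs ! d"
      using low order_trans by (metis not_less)
    have "i' \<le> min c i \<and> max c (j - 1) < j'"
      by (rule rects_maximal[OF L Y(1) _ high, where c = i]) (use X1 c down in auto)
    then show False using Y(2) by (auto simp: covers_column_def)
  qed
  moreover have "a \<le> hs ! d" if d: "min c i' \<le> d" "d \<le> max c (j' - 1)" for d
  proof (cases "i' \<le> d \<and> d < j'")
    case True
    then show ?thesis using rectsD(5)[OF L Y(1), of d] \<open>a < k'\<close> by auto
  next
    case False
    then show ?thesis using low d down Y(2) X1(1) by (auto simp: covers_column_def)
  qed
  moreover have "w \<in> {min c i'..max c (j' - 1)}" using w down by auto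
  ultimately show ?thesis using Y(2) w(2) by (auto simp: separated_at_def)
qed

lemma separated_at_step:
  assumes L: "0 < L" and c: "c < length hs"
    and X: "(i, j, k) \<in> rects L hs" "separated_at hs c a (i, j, k)"
    and Y: "(i', j', k') \<in> rects L hs" "\<not> covers_column c (i', j', k')"
    and touch: "touches L (i, j, k) (i', j', k')"
  shows "separated_at hs c a (i', j', k')"
  using touches_rects_nested[OF L X(1) Y(1) touch] separated_at_climb[OF L X Y(1)]
    separated_at_descend[OF L c X Y] by blast

lemma separated_at_return:
  assumes L: "0 < L"
    and X: "(i, j, k) \<in> rects L hs" "separated_at hs c a (i, j, k)"
    and G: "(i', j', k') \<in> rects L hs" "covers_column c (i', j', k')"
    and touch: "touches L (i, j, k) (i', j', k')"
  shows "k' = a"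
proof -
  from X(2) have Xc: "\<not> covers_column c (i, j, k)" and "a < k"
    and "\<exists>d \<in> {min c i..max c (j - 1)}. hs ! d \<le> a"
    by (auto simp: separated_at_def)
  then obtain w where w: "min c i \<le> w" "w \<le> max c (j - 1)" "hs ! w \<le> a" by auto
  have down: "k = Suc k'" and sub: "i' \<le> i" "j \<le> j'"
    using touches_rects_nested[OF L X(1) G(1) touch] G(2) Xc by (auto simp: covers_column_def)
  then have "k' \<le> hs ! w"
    using rectsD(5)[OF L G(1), of w] w G(2) rectsD(1)[OF L X(1)] by (auto simp: covers_column_def)
  then show ?thesis using w(3) down \<open>a < k\<close> by simp
qed

lemma contact_path_stays_separated:
  assumes L: "0 < L" and c: "c < length hs"
    and path: "set ps \<subseteq> rects L hs" "\<And>n. Suc n < length ps \<Longrightarrow> touches L (ps ! n) (ps ! Suc n)"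
    and G: "(i, j, a) \<in> rects L hs" "covers_column c (i, j, a)"
    and avoid: "\<And>n. m \<le> n \<Longrightarrow> n < length ps \<Longrightarrow> ps ! n \<noteq> (i, j, a)"
    and start: "separated_at hs c a (ps ! m)"
    and n: "m \<le> n" "n < length ps"
  shows "separated_at hs c a (ps ! n)"
  using n
proof (induction n rule: nat_induct_at_least)
  case base
  from start show ?case .
next
  case (Suc n)
  obtain i1 j1 k1 where X: "ps ! n = (i1, j1, k1)" by (cases "ps ! n")
  obtain i2 j2 k2 where Y: "ps ! Suc n = (i2, j2, k2)" by (cases "ps ! Suc n")
  have X1: "(i1, j1, k1) \<in> rects L hs" and Y1: "(i2, j2, k2) \<in> rects L hs"
    using path(1) Suc.prems X Y nth_mem[of n ps] nth_mem[of "Suc n" ps] by auto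
  have sep: "separated_at hs c a (i1, j1, k1)" using Suc X by simp
  have touch: "touches L (i1, j1, k1) (i2, j2, k2)" using path(2)[OF Suc.prems] X Y by simp
  have "\<not> covers_column c (i2, j2, k2)"
  proof
    assume cov: "covers_column c (i2, j2, k2)"
    then have "k2 = a" using separated_at_return[OF L X1 sep Y1 cov touch] by simp
    then have "(i2, j2) = (i, j)"
      using rects_unique_at_column[OF L, of i2 j2 a hs i j c] Y1 G cov
      by (auto simp: covers_column_def)
    then show False using avoid[of "Suc n"] Suc Y \<open>k2 = a\<close> by simp
  qed
  then show ?case using separated_at_step[OF L c X1 sep Y1 _ touch] Y by simp
qed

lemma contact_path_covers_column:
  assumes L: "0 < L" and c: "c < length hs"
    and path: "ps \<noteq> []" "distinct ps" "set ps \<subseteq> rects L hs"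
      "\<And>n. Suc n < length ps \<Longrightarrow> touches L (ps ! n) (ps ! Suc n)"
    and ends: "covers_column c (hd ps)" "covers_column c (last ps)"
  shows "\<forall>R \<in> set ps. covers_column c R"
proof (rule ccontr)
  assume "\<not> ?thesis"
  then obtain m where "m < length ps" "\<not> covers_column c (ps ! m)"
    by (auto simp: in_set_conv_nth)
  moreover have "covers_column c (ps ! 0)" using ends(1) path(1) by (simp add: hd_conv_nth)
  ultimately obtain s where s: "Suc s < length ps" "covers_column c (ps ! s)"
    "\<not> covers_column c (ps ! Suc s)"
    using ex_least_nat_less[of "\<lambda>m. \<not> covers_column c (ps ! m)" m] by force
  obtain i j a where G: "ps ! s = (i, j, a)" by (cases "ps ! s")
  obtain i' j' k' where X: "ps ! Suc s = (i', j', k')" by (cases "ps ! Suc s")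
  have G1: "(i, j, a) \<in> rects L hs" "covers_column c (i, j, a)"
    using path(3) s G nth_mem[of s ps] by auto
  have X1: "(i', j', k') \<in> rects L hs" using path(3) s(1) X nth_mem[of "Suc s" ps] by auto
  have "touches L (i, j, a) (i', j', k')" using path(4)[OF s(1)] G X by simp
  then have "separated_at hs c a (ps ! Suc s)"
    using separated_at_leave[OF L c G1 X1] s(3) X by simp
  moreover have "ps ! n \<noteq> (i, j, a)" if "Suc s \<le> n" "n < length ps" for n
    using nth_eq_iff_index_eq[OF path(2), of n s] that s(1) G by auto
  ultimately have "separated_at hs c a (ps ! (length ps - 1))"
    using contact_path_stays_separated[OF L c path(3,4) G1, of "Suc s" "length ps - 1"] s(1)
    by auto
  then show False
    using ends(2) path(1) by (cases "last ps") (auto simp: last_conv_nth separated_at_def)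
qed

lemma uniform_hist_nth_upto_first_tab:
  assumes uh: "uniform_hist hs"
  shows "c \<le> (LEAST t. is_tab hs t) \<Longrightarrow> c < length hs \<Longrightarrow> hs ! c = Suc c"
proof (induction c rule: less_induct)
  case (less c)
  show ?case
  proof (cases c)
    case 0
    then show ?thesis using uniform_histD(1)[OF uh] by simp
  next
    case (Suc b)
    have IH: "hs ! b = Suc b" "0 < b \<Longrightarrow> hs ! (b - 1) = b"
      using less Suc by auto
    have "\<not> is_tab hs b" using not_less_Least[of b "is_tab hs"] less.prems Suc by simp
    then have "hs ! b \<le> hs ! Suc b" using IH less.prems Suc by (auto simp: is_tab_def)
    then show ?thesis using uniform_histD(3)[OF uh, of b] IH less.prems Suc by auto
  qed
qed

lemma uniform_hist_nth_from_last_tab: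
  assumes uh: "uniform_hist hs"
  shows "(GREATEST t. is_tab hs t) \<le> c \<Longrightarrow> c < length hs \<Longrightarrow> hs ! c = length hs - c"
proof (induction "length hs - c" arbitrary: c rule: less_induct)
  case less
  show ?case
  proof (cases "Suc c = length hs")
    case True
    then show ?thesis using uniform_histD(2)[OF uh] by (simp add: True[symmetric])
  next
    case False
    then have c: "Suc c < length hs" using less.prems by simp
    have IH: "hs ! Suc c = length hs - Suc c"
      "Suc (Suc c) < length hs \<Longrightarrow> hs ! Suc (Suc c) = length hs - Suc (Suc c)"
      using less c by auto
    have "\<not> is_tab hs (Suc c)"
    proof
      assume "is_tab hs (Suc c)"
      then have "Suc c \<le> (GREATEST t. is_tab hs t)"
        by (rule Greatest_le_nat[of _ _ "length hs"]) (auto simp: is_tab_def)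
      with less.prems show False by simp
    qed
    then have "hs ! Suc c \<le> hs ! c" using IH c by (auto simp: is_tab_def)
    then show ?thesis using uniform_histD(3)[OF uh c] IH c by auto
  qed
qed

lemma tab_edge_subset_rbox_covers:
  assumes "0 < L" and "tab_edge L hs c \<subseteq> rbox L (i, j, k)"
  shows "covers_column c (i, j, k)"
proof -
  have "(L * real c, L * real (hs ! c)) \<in> rbox L (i, j, k)"
       "(L * real (Suc c), L * real (hs ! c)) \<in> rbox L (i, j, k)"
    using assms(2) ends_in_segment unfolding tab_edge_def by blast+
  then have "L * real i \<le> L * real c" "L * real (Suc c) \<le> L * real j"
    unfolding rbox_def by auto
  then show ?thesis using assms(1) by (simp add: mult_le_cancel_left_pos covers_column_def)
qed

lemma on_path_from_base_covers_column:
  assumes L: "0 < L" and l: "l \<in> rects L hs" "covers_column c l"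
    and "on_path L hs (base_rect hs) l R"
  shows "R \<in> rects L hs \<and> covers_column c R"
proof -
  obtain ps where ps: "ps \<noteq> []" "distinct ps" "hd ps = base_rect hs" "last ps = l"
    "set ps \<subseteq> rects L hs" "\<And>n. Suc n < length ps \<Longrightarrow> touches L (ps ! n) (ps ! Suc n)"
    "R \<in> set ps"
    using assms(4) unfolding on_path_def by blast
  have c: "c < length hs"
    using l rectsD(2)[OF L, of "fst l" "fst (snd l)" "snd (snd l)" hs]
    by (auto simp: covers_column_def)
  then have "covers_column c (hd ps)" by (simp add: ps(3) base_rect_def covers_column_def)
  then show ?thesis
    using contact_path_covers_column[OF L c ps(1,2,5,6)] ps(4,5,7) l(2) by auto
qed

lemma on_left_spine_covers_first_tab:
  assumes "0 < L" and "on_left_spine L hs R"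
  shows "R \<in> rects L hs \<and> covers_column (LEAST c. is_tab hs c) R"
proof -
  obtain i j k where l: "leftmost_leaf L hs (i, j, k)" "on_path L hs (base_rect hs) (i, j, k) R"
    using assms(2) unfolding on_left_spine_def by auto
  then have "(i, j, k) \<in> rects L hs" "covers_column (LEAST c. is_tab hs c) (i, j, k)"
    using tab_edge_subset_rbox_covers[OF assms(1)] by (auto simp: leftmost_leaf_def)
  then show ?thesis using on_path_from_base_covers_column[OF assms(1)] l(2) by blast
qed

lemma on_right_spine_covers_last_tab:
  assumes "0 < L" and "on_right_spine L hs R"
  shows "R \<in> rects L hs \<and> covers_column (GREATEST c. is_tab hs c) R"
proof -
  obtain i j k where l: "rightmost_leaf L hs (i, j, k)" "on_path L hs (base_rect hs) (i, j, k) R"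
    using assms(2) unfolding on_right_spine_def by auto
  then have "(i, j, k) \<in> rects L hs" "covers_column (GREATEST c. is_tab hs c) (i, j, k)"
    using tab_edge_subset_rbox_covers[OF assms(1)] by (auto simp: rightmost_leaf_def)
  then show ?thesis using on_path_from_base_covers_column[OF assms(1)] l(2) by blast
qed

lemma obtain_column_containing:
  assumes "0 \<le> t" "t \<le> real j" "0 < j"
  obtains c where "c < j" "real c \<le> t" "t \<le> real (Suc c)"
proof (cases "t < real j")
  case True
  then show ?thesis
    using that[of "nat \<lfloor>t\<rfloor>"] assms(1) by (simp add: of_nat_nat) linarith
next
  case False
  then show ?thesis using that[of "j - 1"] assms by (simp add: of_nat_diff)
qed

lemma sees_origin:
  assumes L: "0 < L" and j: "0 < j" "j \<le> length hs" and "k \<le> j"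
    and high: "\<And>c. c < j \<Longrightarrow> min (Suc c) k \<le> hs ! c"
  shows "sees L hs (0, 0) (L * real j, L * real k)"
  unfolding sees_def
proof
  fix z assume "z \<in> closed_segment (0, 0) (L * real j, L * real k)"
  then obtain u where u: "0 \<le> u" "u \<le> 1" and z: "z = (L * (u * real j), L * (u * real k))"
    by (auto simp: closed_segment_def)
  have "0 \<le> u * real j" "u * real j \<le> real j"
    using u by (auto simp: mult_left_le_one_le)
  then obtain c where c: "c < j" "real c \<le> u * real j" "u * real j \<le> real (Suc c)"
    using obtain_column_containing j(1) by blast
  have "u * real k \<le> u * real j" "u * real k \<le> real k"
    using u \<open>k \<le> j\<close> by (auto simp: mult_left_mono mult_left_le_one_le)
  then have "u * real k \<le> real (hs ! c)"
    using high[OF c(1)] c(3) by (simp add: min_def split: if_splits)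
  then show "z \<in> polygon L hs"
    using L u c j(2) by (auto simp: z polygon_def mult_left_mono intro!: exI[of _ c])
qed

lemma mem_polygon_rev_iff:
  "(x, y) \<in> polygon L (rev hs) \<longleftrightarrow> (L * real (length hs) - x, y) \<in> polygon L hs"
proof -
  have mirror: "L * real c \<le> x \<and> x \<le> L * real (Suc c) \<longleftrightarrow>
    L * real c' \<le> L * real (length hs) - x \<and> L * real (length hs) - x \<le> L * real (Suc c')"
    if "c + c' + 1 = length hs" for c c'
  proof -
    have "real (length hs) = real c + real c' + 1" using that by linarith
    then show ?thesis by (auto simp: algebra_simps)
  qed
  show ?thesis
  proof
    assume "(x, y) \<in> polygon L (rev hs)"
    then obtain c where "c < length hs" "0 \<le> y" "L * real c \<le> x" "x \<le> L * real (Suc c)"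
      "y \<le> L * real (hs ! (length hs - Suc c))"
      by (auto simp: polygon_def rev_nth)
    then show "(L * real (length hs) - x, y) \<in> polygon L hs"
      using mirror[of c "length hs - Suc c"] by (auto simp: polygon_def intro!: exI[of _ "length hs - Suc c"])
  next
    assume "(L * real (length hs) - x, y) \<in> polygon L hs"
    then obtain c' where "c' < length hs" "0 \<le> y" "L * real c' \<le> L * real (length hs) - x"
      "L * real (length hs) - x \<le> L * real (Suc c')" "y \<le> L * real (hs ! c')"
      by (auto simp: polygon_def)
    then show "(x, y) \<in> polygon L (rev hs)"
      using mirror[of "length hs - Suc c'" c']
      by (auto simp: polygon_def rev_nth Suc_diff_Suc intro!: exI[of _ "length hs - Suc c'"])
  qed
qed

lemma sees_rev_iff:
  "sees L (rev hs) (x1, y1) (x2, y2) \<longleftrightarrow>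
   sees L hs (L * real (length hs) - x1, y1) (L * real (length hs) - x2, y2)"
proof -
  define f where "f = (\<lambda>(x, y). (L * real (length hs) - x, y :: real))"
  have "f = (\<lambda>z. (L * real (length hs), 0) + (\<lambda>(x, y). (- x, y)) z)"
    by (auto simp: f_def)
  moreover have "linear (\<lambda>(x :: real, y :: real). (- x, y))"
    by (rule linearI) auto
  ultimately have seg: "closed_segment (f p) (f q) = f ` closed_segment p q" for p q
    by (simp add: closed_segment_translation closed_segment_linear_image image_image)
  have "polygon L (rev hs) = f -` polygon L hs"
    by (auto simp: f_def mem_polygon_rev_iff)
  then show ?thesis
    using seg[of "(x1, y1)" "(x2, y2)"] by (auto simp: sees_def f_def image_subset_iff_subset_vimage)
qed

lemma orientation_fixed_base_first_tab:
  assumes L: "0 < L" and uh: "uniform_hist hs" and R: "(i, j, k) \<in> rects L hs"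
    and cov: "covers_column (LEAST c. is_tab hs c) (i, j, k)" and ne: "(i, j, k) \<noteq> base_rect hs"
  shows "orientation_fixed L hs (base_rect hs) (i, j, k)"
proof -
  note R1 = rectsD[OF L R]
  have stair: "c \<le> i \<Longrightarrow> hs ! c = Suc c" for c
    using uniform_hist_nth_upto_first_tab[OF uh, of c] cov R1(1,2) by (auto simp: covers_column_def)
  have "sees L hs (0, 0) (L * real j, L * real k)"
  proof (rule sees_origin[OF L])
    show "k \<le> j" using stair[of i] R1(1,3) by simp
    show "min (Suc c) k \<le> hs ! c" if "c < j" for c
      using stair[of c] R1(5)[of c] that by (cases "c \<le> i") auto
  qed (use R1 in auto)
  then show ?thesis
    using ne by (auto simp: orientation_fixed_def base_rect_def bottom_vertices_def top_vertices_def)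
qed

lemma orientation_fixed_base_last_tab:
  assumes L: "0 < L" and uh: "uniform_hist hs" and R: "(i, j, k) \<in> rects L hs"
    and cov: "covers_column (GREATEST c. is_tab hs c) (i, j, k)" and ne: "(i, j, k) \<noteq> base_rect hs"
  shows "orientation_fixed L hs (base_rect hs) (i, j, k)"
proof -
  note R1 = rectsD[OF L R]
  let ?n = "length hs"
  have stair: "j - 1 \<le> d \<Longrightarrow> d < ?n \<Longrightarrow> hs ! d = ?n - d" for d
    using uniform_hist_nth_from_last_tab[OF uh, of d] cov by (auto simp: covers_column_def)
  have "sees L (rev hs) (0, 0) (L * real (?n - i), L * real k)"
  proof (rule sees_origin[OF L])
    show "k \<le> ?n - i" using stair[of "j - 1"] R1(1,2,4) by simp
    show "min (Suc c) k \<le> rev hs ! c" if "c < ?n - i" for c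
    proof -
      have "i \<le> ?n - Suc c" "?n - Suc c < ?n" using that by auto
      then show ?thesis using stair[of "?n - Suc c"] R1(5)[of "?n - Suc c"] that
        by (cases "?n - Suc c < j") (auto simp: rev_nth)
    qed
  qed (use R1 in auto)
  then have "sees L hs (L * real ?n, 0) (L * real i, L * real k)"
    using R1(1,2) by (simp add: sees_rev_iff of_nat_diff algebra_simps)
  then show ?thesis
    using ne by (auto simp: orientation_fixed_def base_rect_def bottom_vertices_def top_vertices_def)
qed

theorem lemma14:
  fixes L :: real and hs :: "nat list" and R :: "nat \<times> nat \<times> nat"
  assumes "0 < L" and "uniform_hist hs"
    and "on_left_spine L hs R \<or> on_right_spine L hs R"
    and "R \<noteq> base_rect hs"
  shows "orientation_fixed L hs (base_rect hs) R"
proof -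
  obtain i j k where R: "R = (i, j, k)" by (cases R)
  from assms(3) show ?thesis
  proof
    assume "on_left_spine L hs R"
    then show ?thesis
      using on_left_spine_covers_first_tab[OF assms(1)] orientation_fixed_base_first_tab[OF assms(1,2)]
        assms(4) R by blast
  next
    assume "on_right_spine L hs R"
    then show ?thesis
      using on_right_spine_covers_last_tab[OF assms(1)] orientation_fixed_base_last_tab[OF assms(1,2)]
        assms(4) R by blast
  qed
qed

end
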